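(* Let $A$ be an associative algebra and $BA$ its bar construction. Define operators $i':\hat X(BA)\to \hat X^2(BA)$, $r':\hat X^2(BA)\to \hat X(BA)$ and $h':\hat X^2(BA)\to \hat X^2(BA)$ (the latter odd) by $i'=I$ (the natural inclusion), $r'(\omega_0+\omega_2+\omega_1)=\omega_0+\theta\omega_1$ and $h'(\omega_0+\omega_2+\omega_1)=\nabla\omega_2$. Then $(r',h',i')$ is a special deformation retract of the supercomplex $(\hat X^2(BA),b)$ onto the supercomplex $(\hat X(BA),b)$, i.e. $r'i'=1$, $i'r'=1+bh'+h'b$ and $h'i'=0$.
   Context: Bar construction: for an associative algebra $A$, $BA=\bigoplus_{n\ge0}A^{\otimes n}$ is the tensor coalgebra (deconcatenation coproduct $\Delta(a_1,\dots,a_n)=\sum_i (a_1,\dots,a_i)\otimes(a_{i+1},\dots,a_n)$, counit $\eta$ the projection to $A^{\otimes 0}=k$) with differential $b'(a_1,\dots,a_n)=(-1)^n\sum_{i=1}^{n-1}(-1)^{i-1}(a_1,\dots,a_ia_{i+1},\dots,a_n)$; it is a DG coalgebra. Put $\bar BA=\ker\eta=\bigoplus_{n\ge1}A^{\otimes n}$. Universal codifferential forms: for a DG coalgebra $C$ with counit $\eta$ and $\bar C=\ker\eta$, $\Omega C$ is the DG coalgebra of universal codifferential forms (the coalgebra dual of the Cuntz–Quillen algebra of universal differential forms), with $\Omega^nC=C\otimes\bar C^{\otimes n}$, codifferential $d$, Hochschild-type operator $b:\Omega^\bullet C\to\Omega^{\bullet+1}C$, number operator $N$ (multiplication by form degree);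 $\natural$ denotes the cocommutator subspace, and $\dot\Omega^1C$ denotes the degree-one part of $\Omega^{norm}C=\ker((b+dN)^2)$; $\Omega^1C_\natural\subset\dot\Omega^1C$. The $X$-complex $X(C)$ is the $\mathbb Z/2$-graded (super)complex $C\rightleftarrows\Omega^1C_\natural$ with maps $b$ (from $C$) and $d$ (back), and $X^2(C)$ is $C\oplus\Omega^2C_\natural\rightleftarrows\dot\Omega^1C$ with maps $b+2d$ and $b+d$. These are bicomplexes whose horizontal differential $\partial_1$ is built from $b,d$ and whose vertical differential $\partial_2$ is induced by the internal differential of $C$; $\hat X(C)$, $\hat X^2(C)$ denote the total supercomplexes. Elements of $\hat X(C)$ are written $\omega_0+\omega_1$ ($\omega_0\in C$, $\omega_1\in\Omega^1C_\natural$) and of $\hat X^2(C)$ as $\omega_0+\omega_2+\omega_1$ ($\omega_0\in C$, $\omega_2\in\Omega^2C_\natural$, $\omega_1\in\dot\Omega^1C$). $I:\hat X(C)\to\hat X^2(C)$ is induced by the inclusions $C\to C\oplus\Omega^2C_\natural$, $\Omega^1C_\natural\to\dot\Omega^1C$. "$(\hat X^2(BA),b)$" denotes the supercomplex with differential given only by the $b$-parts. For $C=BA$: $\Omega^1BA=BA\otimes\bar BA\cong BA\otimes A\otimes BA$, $\Omega^1BA_\natural\cong A\otimes BA$, $\Omega^2BA=BA\otimes\bar BA\otimes\bar BA$. The map $\theta:\Omega^1BA\to\Omega^1BA_\natural$ is $\theta(\alpha\otimes a\otimes\beta)=\eta(\alpha)\,a\otimes\beta$ (a left inverse of the inclusion).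 The connection $\nabla:\Omega^2BA\to\Omega^1BA$ is supported on $BA\otimes\bar BA\otimes A$ and given by $\nabla(\beta\otimes\alpha\otimes a)=\alpha\otimes a\otimes\beta$ for $\beta\in BA$, $\alpha\in\bar BA$, $a\in A$. Special deformation retract: chain maps $L\xrightarrow{i}M\xrightarrow{r}L$ and an odd map $h:M\to M$ with $ri=1_L$, $ir=1_M+\partial h+h\partial$, $hi=0$. *)

theory Defs
  imports Main "HOL-Library.Product_Plus" "HOL-Library.Function_Algebras"
begin

text \<open>
  The associative algebra A is
  given by a basis, indexed by the type 'b (every vector space over a field has a basis),
  and by its structure constants: the product of basis elements x and y is
  sum over z of (alg_mult x y z) times z.  Consequently A^{\<otimes> n} is the free
  'k-vector space on the words of length n over 'b, BA on all words, and
  Omega^n BA = BA \<otimes> \<bar>BA^{\<otimes> n} is the free vector space on lists [w0,w1,...,wn]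
  of words with w1,...,wn nonempty.  All spaces of universal codifferential forms
  are represented uniformly as finitely supported functions on 'b list list.
\<close>

type_synonym ('b, 'k) form = "'b list list \<Rightarrow> 'k"

definition supp_fn :: "('a \<Rightarrow> 'k::zero) \<Rightarrow> 'a set" where
  "supp_fn f = {x. f x \<noteq> 0}"

definition assoc_algebra :: "('b \<Rightarrow> 'b \<Rightarrow> 'b \<Rightarrow> 'k::field) \<Rightarrow> bool" where
  "assoc_algebra m \<longleftrightarrow>
     (\<forall>x y. finite {z. m x y z \<noteq> 0}) \<and>
     (\<forall>x y z v. (\<Sum>w\<in>{w. m x y w \<noteq> 0}. m x y w * m w z v)
              = (\<Sum>w\<in>{w. m y z w \<noteq> 0}. m y z w * m x w v))"

definition valid_idx :: "'b list list \<Rightarrow> bool" where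
  "valid_idx y \<longleftrightarrow> (\<forall>i. 1 \<le> i \<and> i < length y \<longrightarrow> y ! i \<noteq> [])"

definition Omega :: "nat \<Rightarrow> ('b, 'k::zero) form set" where
  "Omega n = {f. finite (supp_fn f) \<and>
                 (\<forall>y. f y \<noteq> 0 \<longrightarrow> length y = Suc n \<and> valid_idx y)}"

definition merge_at :: "nat \<Rightarrow> 'b list list \<Rightarrow> 'b list list" where
  "merge_at i y = take i y @ [y ! i @ y ! Suc i] @ drop (Suc (Suc i)) y"

text \<open>The Hochschild-type operator b : Omega^n -> Omega^(n+1), the transpose (coalgebra dual)
  of the Cuntz--Quillen b.  On basis elements:
  b(c0|c1|...|cn) = sum_{i=0}^n (-1)^i (c0|..|c_i'|c_i''|..|cn) + (-1)^(n+1) (c0''|c1|..|cn|c0'),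
  using the deconcatenation coproduct (reduced where the factor must lie in the augmentation
  coideal).\<close>
definition bop :: "('b, 'k::comm_ring_1) form \<Rightarrow> ('b, 'k) form" where
  "bop f y =
     (if valid_idx y \<and> 2 \<le> length y then
        (\<Sum>i<length y - 1. (-1) ^ i * f (merge_at i y))
        + (-1) ^ (length y - 1) * f ((last y @ hd y) # butlast (tl y))
      else 0)"

text \<open>The codifferential d : Omega^(n+1) -> Omega^n, d(c0|c1|...|c_{n+1}) = eta(c0) (c1|...|c_{n+1}),
  written coefficientwise.\<close>
definition dop :: "('b, 'k::zero) form \<Rightarrow> ('b, 'k) form" where
  "dop f y = (if valid_idx y \<and> y \<noteq> [] \<and> hd y \<noteq> [] then f ([] # y) else 0)"

definition Nop :: "('b, 'k::semiring_1) form \<Rightarrow> ('b, 'k) form" where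
  "Nop f y = of_nat (length y - 1) * f y"

text \<open>Cocommutator subspace Omega^n_natural (dual of Omega^n/[Omega,Omega]^n with
  [Omega,Omega] = b Omega + d b Omega), i.e. the kernel of b and of b d.\<close>
definition Omega_nat :: "nat \<Rightarrow> ('b, 'k::comm_ring_1) form set" where
  "Omega_nat n = {f \<in> Omega n. bop f = 0 \<and> bop (dop f) = 0}"

definition Omega_dot1 :: "('b, 'k::comm_ring_1) form set" where
  "Omega_dot1 = {f \<in> Omega 1.
      (\<lambda>g. bop g + dop (Nop g)) ((\<lambda>g. bop g + dop (Nop g)) f) = 0}"

text \<open>The canonical identification BA \<otimes> A \<otimes> BA \<cong> Omega^1 BA = BA \<otimes> \<bar>BA
  is alpha \<otimes> a \<otimes> beta \<mapsto> sum over alpha = alpha1 alpha2 of alpha1 | (alpha2 a beta)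
  (coproduct on the first factor, then concatenation); psi is its inverse
  psi(c0|c1) = c0 \<otimes> c1_1 \<otimes> (c1_2...) - sum_{c0 = c0' x} c0' \<otimes> x \<otimes> c1.\<close>
definition psi_inv :: "('b list \<times> 'b \<times> 'b list \<Rightarrow> 'k::comm_ring_1) \<Rightarrow> ('b, 'k) form" where
  "psi_inv u y =
     (if length y = 2 \<and> y ! 1 \<noteq> [] then
        (\<Sum>k<length (y ! 1). u (y ! 0 @ take k (y ! 1), y ! 1 ! k, drop (Suc k) (y ! 1)))
      else 0)"

definition psi :: "('b, 'k::comm_ring_1) form \<Rightarrow> ('b list \<times> 'b \<times> 'b list \<Rightarrow> 'k)" where
  "psi f = (\<lambda>(g, a, be). f [g, a # be] - (if be \<noteq> [] then f [g @ [a], be] else 0))"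

definition theta0 :: "('b list \<times> 'b \<times> 'b list \<Rightarrow> 'k::zero) \<Rightarrow> ('b \<times> 'b list \<Rightarrow> 'k)" where
  "theta0 u = (\<lambda>(a, be). u ([], a, be))"

text \<open>theta : Omega^1 BA \<rightarrow> Omega^1 BA_natural, where Omega^1 BA_natural is identified with
  A \<otimes> BA through theta itself (theta being a left inverse of the inclusion):
  theta(w) is the element of Omega^1_natural with the same image under theta_0 o psi.\<close>
definition theta :: "('b, 'k::comm_ring_1) form \<Rightarrow> ('b, 'k) form" where
  "theta f = (THE x. x \<in> Omega_nat 1 \<and> theta0 (psi x) = theta0 (psi f))"

text \<open>The connection nabla : Omega^2 BA \<rightarrow> Omega^1 BA, supported on BA \<otimes> \<bar>BA \<otimes> A,
  nabla(beta \<otimes> alpha \<otimes> a) = alpha \<otimes> a \<otimes> beta.\<close>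
definition nabla :: "('b, 'k::comm_ring_1) form \<Rightarrow> ('b, 'k) form" where
  "nabla f = psi_inv (\<lambda>(al, a, be). f [be, al, [a]])"

definition Xhat :: "(('b, 'k::comm_ring_1) form \<times> ('b, 'k) form) set" where
  "Xhat = Omega 0 \<times> Omega_nat 1"

definition X2hat :: "(('b, 'k::comm_ring_1) form \<times> ('b, 'k) form \<times> ('b, 'k) form) set" where
  "X2hat = {(w0, w2, w1). w0 \<in> Omega 0 \<and> w2 \<in> Omega_nat 2 \<and> w1 \<in> Omega_dot1}"

text \<open>The b-parts of the differentials: on X, C -b-> Omega^1_natural (the map back is d,
  which has no b-part); on X^2, b+2d has b-part omega0 \<mapsto> b omega0 and b+d has b-part
  omega1 \<mapsto> b omega1 \<in> Omega^2_natural.\<close>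
definition bX :: "('b, 'k::comm_ring_1) form \<times> ('b, 'k) form \<Rightarrow> ('b, 'k) form \<times> ('b, 'k) form" where
  "bX = (\<lambda>(w0, w1). (0, bop w0))"

definition bX2 :: "('b, 'k::comm_ring_1) form \<times> ('b, 'k) form \<times> ('b, 'k) form
                    \<Rightarrow> ('b, 'k) form \<times> ('b, 'k) form \<times> ('b, 'k) form" where
  "bX2 = (\<lambda>(w0, w2, w1). (0, bop w1, bop w0))"

definition i' :: "('b, 'k::comm_ring_1) form \<times> ('b, 'k) form \<Rightarrow> ('b, 'k) form \<times> ('b, 'k) form \<times> ('b, 'k) form" where
  "i' = (\<lambda>(w0, w1). (w0, 0, w1))"

definition r' :: "('b, 'k::comm_ring_1) form \<times> ('b, 'k) form \<times> ('b, 'k) form \<Rightarrow> ('b, 'k) form \<times> ('b, 'k) form" where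
  "r' = (\<lambda>(w0, w2, w1). (w0, theta w1))"

definition h' :: "('b, 'k::comm_ring_1) form \<times> ('b, 'k) form \<times> ('b, 'k) form \<Rightarrow> ('b, 'k) form \<times> ('b, 'k) form \<times> ('b, 'k) form" where
  "h' = (\<lambda>(w0, w2, w1). (0, 0, nabla w2))"

end

theory Submission
  imports Defs
begin

text \<open>The \<open>b\<close>-parts of the
  differentials only involve the deconcatenation coproduct of \<open>BA\<close>, never the product of \<open>A\<close>.

  Two identities carry the retract. For \<open>\<omega>\<^sub>2 \<in> \<Omega>\<^sup>2BA\<^sub>\<natural>\<close> the connection inverts \<open>b\<close> up to
  sign, \<open>b\<nabla>\<omega>\<^sub>2 = -\<omega>\<^sub>2\<close>: on a basis element \<open>b\<nabla>\<omega>\<^sub>2\<close> telescopes, by the cocycle condition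
  \<open>b\<omega>\<^sub>2 = 0\<close>, to two values of \<open>\<omega>\<^sub>2\<close>, which the cyclicity coming from \<open>bd\<omega>\<^sub>2 = 0\<close> identifies
  with \<open>-\<omega>\<^sub>2\<close>. For \<open>\<omega>\<^sub>1 \<in> Omega_dot1\<close> the corrected form \<open>\<omega>\<^sub>1 + \<nabla>b\<omega>\<^sub>1\<close> lies in
  \<open>\<Omega>\<^sup>1BA\<^sub>\<natural>\<close> and has the same image as \<open>\<omega>\<^sub>1\<close> under \<open>\<theta>\<^sub>0\<psi>\<close>, since \<open>\<theta>\<^sub>0\<psi>\<close> kills the image
  of \<open>\<nabla>\<close>; as \<open>\<theta>\<^sub>0\<psi>\<close> is injective on \<open>b\<close>-cocycles of \<open>\<Omega>\<^sup>1BA\<close>, this gives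
  \<open>\<theta>\<omega>\<^sub>1 = \<omega>\<^sub>1 + \<nabla>b\<omega>\<^sub>1\<close>. Then \<open>i'r' = 1 + bh' + h'b\<close> holds componentwise.\<close>

subsection \<open>The spaces \<open>\<Omega>\<^sup>n\<close>\<close>

lemma valid_idx_Cons: "valid_idx (a # ys) \<longleftrightarrow> [] \<notin> set ys"
  unfolding valid_idx_def by (auto simp: in_set_conv_nth)

lemma length_2_conv: "length y = 2 \<longleftrightarrow> (\<exists>a b. y = [a, b])"
  by (auto simp: numeral_2_eq_2 length_Suc_conv)

lemma length_3_conv: "length y = 3 \<longleftrightarrow> (\<exists>a b c. y = [a, b, c])"
  by (auto simp: numeral_3_eq_3 length_Suc_conv)

lemma length_4_conv: "length y = 4 \<longleftrightarrow> (\<exists>a b c d. y = [a, b, c, d])"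
  by (auto simp: eval_nat_numeral length_Suc_conv)

lemma OmegaI:
  "finite (supp_fn f) \<Longrightarrow> (\<And>y. f y \<noteq> 0 \<Longrightarrow> length y = Suc n \<and> valid_idx y) \<Longrightarrow> f \<in> Omega n"
  unfolding Omega_def by auto

lemma Omega_nonzeroD: "f \<in> Omega n \<Longrightarrow> f y \<noteq> 0 \<Longrightarrow> length y = Suc n \<and> valid_idx y"
  unfolding Omega_def by auto

lemma Omega_vanishes: "f \<in> Omega n \<Longrightarrow> length y \<noteq> Suc n \<or> \<not> valid_idx y \<Longrightarrow> f y = 0"
  unfolding Omega_def by auto

lemma Omega_finite_supp: "f \<in> Omega n \<Longrightarrow> finite (supp_fn f)"
  unfolding Omega_def by auto

lemma Omega_eqI:
  "f \<in> Omega n \<Longrightarrow> g \<in> Omega n \<Longrightarrow> (\<And>y. length y = Suc n \<Longrightarrow> valid_idx y \<Longrightarrow> f y = g y) \<Longrightarrow> f = g"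
  by (rule ext) (metis Omega_vanishes)

lemma Omega_zero: "0 \<in> Omega n"
  unfolding Omega_def supp_fn_def by simp

lemma Omega_supp_subset:
  assumes f: "f \<in> Omega n" and g: "g \<in> Omega n"
    and h: "\<And>y. h y \<noteq> 0 \<Longrightarrow> f y \<noteq> 0 \<or> g y \<noteq> 0"
  shows "h \<in> Omega n"
proof (rule OmegaI)
  have "supp_fn h \<subseteq> supp_fn f \<union> supp_fn g"
    using h by (auto simp: supp_fn_def)
  then show "finite (supp_fn h)"
    using Omega_finite_supp[OF f] Omega_finite_supp[OF g] by (auto intro: finite_subset)
qed (use h Omega_nonzeroD[OF f] Omega_nonzeroD[OF g] in blast)

lemma Omega_add: "f \<in> Omega n \<Longrightarrow> g \<in> Omega n \<Longrightarrow> f + g \<in> Omega n"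
  for f g :: "('b, 'k::comm_ring_1) form"
  by (erule Omega_supp_subset) auto

lemma Omega_diff: "f \<in> Omega n \<Longrightarrow> g \<in> Omega n \<Longrightarrow> f - g \<in> Omega n"
  for f g :: "('b, 'k::comm_ring_1) form"
  by (erule Omega_supp_subset) auto

lemma Omega_uminus: "f \<in> Omega n \<Longrightarrow> - f \<in> Omega n"
  for f :: "('b, 'k::comm_ring_1) form"
  by (rule Omega_supp_subset[of f n f]) auto

lemma Omega_scale: "f \<in> Omega n \<Longrightarrow> (\<lambda>y. c * f y) \<in> Omega n"
  for f :: "('b, 'k::comm_ring_1) form"
  by (rule Omega_supp_subset[of f n f]) auto

lemma Omega2_vanishes_Nil:
  assumes "f \<in> Omega 2"
  shows "f [a, [], c] = 0" and "f [a, b, []] = 0"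
  using Omega_vanishes[OF assms] by (auto simp: valid_idx_Cons)

text \<open>Only finitely many index lists of bounded length have letters from a finite set and
  bounded total length; this gives finite support for all forms built from \<open>f\<close> by regrouping
  and rotating the letters of its support.\<close>

lemma Omega_of_regrouping:
  assumes f: "f \<in> Omega m"
    and g: "\<And>y. g y \<noteq> 0 \<Longrightarrow> length y = Suc n \<and> valid_idx y \<and>
              (\<exists>z. f z \<noteq> 0 \<and> set (concat z) = set (concat y) \<and> length (concat z) = length (concat y))"
  shows "g \<in> Omega n"
proof (rule OmegaI)
  define A where "A = (\<Union>z\<in>supp_fn f. set (concat z))"
  define M where "M = Max ((\<lambda>z. length (concat z)) ` supp_fn f)"
  define C where "C = {c. set c \<subseteq> A \<and> length c \<le> M}"
  have "finite A" using Omega_finite_supp[OF f] unfolding A_def supp_fn_def by auto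
  then have "finite C" unfolding C_def by (rule finite_lists_length_le)
  have "set y \<subseteq> C" if "g y \<noteq> 0" for y
  proof
    fix c assume "c \<in> set y"
    then have c: "set c \<subseteq> set (concat y)" "length c \<le> length (concat y)"
      by (auto simp: length_concat intro: member_le_sum_list)
    obtain z where "z \<in> supp_fn f" "set (concat z) = set (concat y)" "length (concat z) = length (concat y)"
      using g[OF \<open>g y \<noteq> 0\<close>] by (auto simp: supp_fn_def)
    moreover have "length (concat z) \<le> M"
      unfolding M_def using Omega_finite_supp[OF f] \<open>z \<in> supp_fn f\<close> by simp
    ultimately show "c \<in> C" using c unfolding C_def A_def by fastforce
  qed
  then have "supp_fn g \<subseteq> {y. set y \<subseteq> C \<and> length y \<le> Suc n}"
    using g by (auto simp: supp_fn_def)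
  then show "finite (supp_fn g)"
    using finite_lists_length_le[OF \<open>finite C\<close>] by (rule finite_subset)
qed (use g in blast)

subsection \<open>The operators \<open>b\<close>, \<open>d\<close> and \<open>N\<close>\<close>

lemma bop_on_pair: "bop f [a, b] = (if b \<noteq> [] then f [a @ b] - f [b @ a] else 0)"
  by (simp add: bop_def valid_idx_Cons merge_at_def)

lemma bop_on_triple:
  "bop f [a, b, c] =
     (if b \<noteq> [] \<and> c \<noteq> [] then f [a @ b, c] - f [a, b @ c] + f [c @ a, b] else 0)"
  by (simp add: bop_def valid_idx_Cons merge_at_def eval_nat_numeral)

lemma bop_on_quadruple:
  "bop f [a, b, c, d] =
     (if b \<noteq> [] \<and> c \<noteq> [] \<and> d \<noteq> []
      then f [a @ b, c, d] - f [a, b @ c, d] + f [a, b, c @ d] - f [d @ a, b, c] else 0)"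
  by (simp add: bop_def valid_idx_Cons merge_at_def eval_nat_numeral)

lemma dop_Cons: "dop f (a # y) = (if a \<noteq> [] \<and> [] \<notin> set y then f ([] # a # y) else 0)"
  by (simp add: dop_def valid_idx_Cons)

lemma bop_zero [simp]: "bop 0 = 0"
  by (simp add: fun_eq_iff bop_def)

lemma dop_zero [simp]: "dop 0 = 0"
  by (simp add: fun_eq_iff dop_def)

lemma bop_add: "bop (f + g) = bop f + bop g"
  by (simp add: fun_eq_iff bop_def sum.distrib algebra_simps)

lemma bop_diff: "bop (f - g) = bop f - bop g"
  by (simp add: fun_eq_iff bop_def sum_subtractf algebra_simps)

lemma bop_scale: "bop (\<lambda>y. c * f y) = (\<lambda>y. c * bop f y)"
  by (simp add: fun_eq_iff bop_def sum_distrib_left algebra_simps)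

lemma dop_add: "dop (f + g) = dop f + dop g"
  for f g :: "('b, 'k::comm_ring_1) form"
  by (simp add: fun_eq_iff dop_def)

lemma dop_scale: "dop (\<lambda>y. c * f y) = (\<lambda>y. c * dop f y)"
  for f :: "('b, 'k::comm_ring_1) form"
  by (simp add: fun_eq_iff dop_def)

lemma Nop_add: "Nop (f + g) = Nop f + Nop g"
  by (simp add: fun_eq_iff Nop_def algebra_simps)

lemma Nop_Omega:
  assumes "f \<in> Omega n"
  shows "Nop f = (\<lambda>y. of_nat n * f y)"
proof
  fix y show "Nop f y = of_nat n * f y"
    using Omega_nonzeroD[OF assms, of y] by (cases "f y = 0") (simp_all add: Nop_def)
qed

lemma length_merge_at: "Suc i < length y \<Longrightarrow> length (merge_at i y) = length y - 1"
  by (simp add: merge_at_def)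

lemma concat_merge_at: "Suc i < length y \<Longrightarrow> concat (merge_at i y) = concat y"
  unfolding merge_at_def
  by (metis Cons_nth_drop_Suc Suc_lessD append_Cons append_Nil append_take_drop_id
      concat.simps(2) concat_append append_assoc)

lemma bop_nonzeroD:
  assumes "bop f y \<noteq> 0"
  shows "valid_idx y \<and> (\<exists>z. f z \<noteq> 0 \<and> length z = length y - 1 \<and>
           set (concat z) = set (concat y) \<and> length (concat z) = length (concat y))"
proof -
  define rot where "rot = (last y @ hd y) # butlast (tl y)"
  have y: "valid_idx y" "2 \<le> length y"
    using assms unfolding bop_def by (simp_all split: if_split_asm)
  then obtain a u l where "y = a # u @ [l]"
    by (cases y; cases "tl y" rule: rev_cases) auto
  then have rot: "length rot = length y - 1" "set (concat rot) = set (concat y)"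
    "length (concat rot) = length (concat y)"
    unfolding rot_def by auto
  have "(\<Sum>i<length y - 1. (-1) ^ i * f (merge_at i y)) + (-1) ^ (length y - 1) * f rot \<noteq> 0"
    using assms y unfolding bop_def rot_def by simp
  then consider i where "i < length y - 1" "f (merge_at i y) \<noteq> 0" | "f rot \<noteq> 0"
    by (metis (no_types, lifting) add_0 lessThan_iff mult_zero_right sum.neutral)
  then show ?thesis
  proof cases
    case 1
    then show ?thesis
      using y length_merge_at[of i y] concat_merge_at[of i y]
      by (intro conjI exI[of _ "merge_at i y"]) auto
  next
    case 2
    then show ?thesis using y rot by blast
  qed
qed

lemma bop_Omega:
  assumes "f \<in> Omega n"
  shows "bop f \<in> Omega (Suc n)"
proof (rule Omega_of_regrouping[OF assms])
  fix y assume "bop f y \<noteq> 0"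
  then obtain z where "valid_idx y" "f z \<noteq> 0" "length z = length y - 1"
    and "set (concat z) = set (concat y)" "length (concat z) = length (concat y)"
    by (blast dest: bop_nonzeroD)
  moreover have "length z = Suc n" using Omega_nonzeroD[OF assms \<open>f z \<noteq> 0\<close>] by simp
  ultimately show "length y = Suc (Suc n) \<and> valid_idx y \<and>
    (\<exists>z. f z \<noteq> 0 \<and> set (concat z) = set (concat y) \<and> length (concat z) = length (concat y))"
    by auto
qed

lemma dop_Omega:
  assumes "f \<in> Omega (Suc n)"
  shows "dop f \<in> Omega n"
proof (rule Omega_of_regrouping[OF assms])
  fix y assume "dop f y \<noteq> 0"
  then have "valid_idx y" "f ([] # y) \<noteq> 0" by (simp_all add: dop_def split: if_split_asm)
  moreover have "length y = Suc n" using Omega_nonzeroD[OF assms \<open>f ([] # y) \<noteq> 0\<close>] by simp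
  ultimately show "length y = Suc n \<and> valid_idx y \<and>
    (\<exists>z. f z \<noteq> 0 \<and> set (concat z) = set (concat y) \<and> length (concat z) = length (concat y))"
    by (intro conjI exI[of _ "[] # y"]) auto
qed

lemma bop_bop_Omega0:
  assumes "f \<in> Omega 0"
  shows "bop (bop f) = 0"
proof (rule Omega_eqI[of _ 2])
  show "bop (bop f) \<in> Omega 2"
    using bop_Omega[OF bop_Omega[OF assms]] by (simp add: numeral_2_eq_2)
  fix y :: "'a list list" assume "length y = Suc 2" "valid_idx y"
  then obtain a b c where "y = [a, b, c]" by (auto simp: length_3_conv)
  then show "bop (bop f) y = 0 y" by (simp add: bop_on_triple bop_on_pair)
qed (rule Omega_zero)

lemma bop_bop_Omega1:
  assumes "f \<in> Omega 1"
  shows "bop (bop f) = 0"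
proof (rule Omega_eqI[of _ 3])
  show "bop (bop f) \<in> Omega 3"
    using bop_Omega[OF bop_Omega[OF assms]] by (simp add: numeral_3_eq_3)
  fix y :: "'a list list" assume "length y = Suc 3" "valid_idx y"
  then obtain a b c d where "y = [a, b, c, d]" by (auto simp: length_4_conv)
  then show "bop (bop f) y = 0 y" by (simp add: bop_on_quadruple bop_on_triple)
qed (rule Omega_zero)

lemma dop_bop_Omega0:
  assumes "f \<in> Omega 0"
  shows "dop (bop f) = 0"
proof (rule Omega_eqI[of _ 0])
  show "dop (bop f) \<in> Omega 0"
    using dop_Omega[OF bop_Omega[OF assms]] .
  fix y :: "'a list list" assume "length y = Suc 0" "valid_idx y"
  then obtain a where "y = [a]" by (auto simp: length_Suc_conv)
  then show "dop (bop f) y = 0 y" by (simp add: dop_Cons bop_on_pair)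
qed (rule Omega_zero)

subsection \<open>The spaces \<open>Omega_nat\<close> and \<open>Omega_dot1\<close>\<close>

lemma Omega_nat_zero: "0 \<in> Omega_nat n"
  by (simp add: Omega_nat_def Omega_zero)

lemma Omega_dot1_iff:
  "w \<in> Omega_dot1 \<longleftrightarrow> w \<in> Omega 1 \<and> bop (dop w) + (\<lambda>y. 2 * dop (bop w) y) = 0"
proof (cases "w \<in> Omega 1")
  case True
  have "Nop w = w" using Nop_Omega[OF True] by simp
  moreover have "Nop (bop w + dop w) = (\<lambda>y. 2 * bop w y)"
    using Nop_Omega[OF bop_Omega[OF True]] Nop_Omega[OF dop_Omega[of w 0]] True
    by (simp add: Nop_add fun_eq_iff)
  moreover have "bop (bop w) = 0" by (rule bop_bop_Omega1[OF True])
  ultimately have "bop (bop w + dop (Nop w)) + dop (Nop (bop w + dop (Nop w)))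
      = bop (dop w) + (\<lambda>y. 2 * dop (bop w) y)"
    by (simp add: bop_add dop_scale)
  then show ?thesis unfolding Omega_dot1_def using True by simp
qed (simp add: Omega_dot1_def)

lemma Omega_nat1_subset_Omega_dot1: "Omega_nat 1 \<subseteq> Omega_dot1"
proof
  fix w assume "w \<in> Omega_nat 1"
  then have "w \<in> Omega 1" "bop w = 0" "bop (dop w) = 0" by (simp_all add: Omega_nat_def)
  then show "w \<in> Omega_dot1" by (simp add: Omega_dot1_iff) (simp add: fun_eq_iff)
qed

lemma bop_Omega0_in_Omega_nat1:
  assumes "f \<in> Omega 0"
  shows "bop f \<in> Omega_nat 1"
  using bop_Omega[OF assms] bop_bop_Omega0[OF assms] dop_bop_Omega0[OF assms]
  by (simp add: Omega_nat_def)

lemma bop_Omega_dot1_in_Omega_nat2: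
  fixes w :: "('b, 'k::field_char_0) form"
  assumes "w \<in> Omega_dot1"
  shows "bop w \<in> Omega_nat 2"
proof -
  have w: "w \<in> Omega 1" "bop (dop w) + (\<lambda>y. 2 * dop (bop w) y) = 0"
    using assms by (simp_all add: Omega_dot1_iff)
  have "dop (bop w) = (\<lambda>y. (- 1 / 2) * bop (dop w) y)"
    using fun_cong[OF w(2)] by (simp add: fun_eq_iff field_simps add_eq_0_iff)
  then have "bop (dop (bop w)) = (\<lambda>y. (- 1 / 2) * bop (bop (dop w)) y)"
    by (simp only: bop_scale)
  then have "bop (dop (bop w)) = 0"
    using bop_bop_Omega0[OF dop_Omega[of w 0]] w(1) by (simp add: fun_eq_iff)
  then show ?thesis
    using bop_Omega[OF w(1)] bop_bop_Omega1[OF w(1)] by (simp add: Omega_nat_def numeral_2_eq_2)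
qed

subsection \<open>The connection \<open>\<nabla>\<close>\<close>

lemma nabla_zero: "nabla 0 = 0"
  by (simp add: fun_eq_iff nabla_def psi_inv_def)

text \<open>\<open>nabla f [c, u] = nabla_sum f [] c u\<close>; the suffix \<open>s\<close> appended to the first slot is what
  makes \<open>nabla_sum\<close> additive over concatenation (\<open>nabla_sum_append\<close>).\<close>

fun nabla_sum :: "('b, 'k::comm_ring_1) form \<Rightarrow> 'b list \<Rightarrow> 'b list \<Rightarrow> 'b list \<Rightarrow> 'k" where
  "nabla_sum f s c [] = 0"
| "nabla_sum f s c (e # u) = f [u @ s, c, [e]] + nabla_sum f s (c @ [e]) u"

lemma nabla_sum_eq_sum:
  "nabla_sum f s c u = (\<Sum>k<length u. f [drop (Suc k) u @ s, c @ take k u, [u ! k]])"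
proof (induction u arbitrary: c)
  case (Cons e u)
  show ?case
    unfolding length_Cons sum.lessThan_Suc_shift using Cons[of "c @ [e]"] by simp
qed simp

lemma nabla_pair: "u \<noteq> [] \<Longrightarrow> nabla f [c, u] = nabla_sum f [] c u"
  by (simp add: nabla_def psi_inv_def nabla_sum_eq_sum)

lemma nabla_sum_append:
  "nabla_sum f s c (u @ v) = nabla_sum f (v @ s) c u + nabla_sum f s (c @ u) v"
  by (induction u arbitrary: c) (simp_all add: algebra_simps)

lemma nabla_nonzeroD:
  assumes "nabla f y \<noteq> 0"
  obtains c u k where "y = [c, u]" "k < length u"
    "f [drop (Suc k) u, c @ take k u, [u ! k]] \<noteq> 0"
proof -
  have "length y = 2" "y ! 1 \<noteq> []"
    using assms unfolding nabla_def psi_inv_def by (simp_all split: if_split_asm)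
  then obtain c u where y: "y = [c, u]" and "u \<noteq> []" by (auto simp: length_2_conv)
  then have "(\<Sum>k<length u. f [drop (Suc k) u, c @ take k u, [u ! k]]) \<noteq> 0"
    using assms by (simp add: nabla_pair nabla_sum_eq_sum)
  then obtain k where "k < length u" "f [drop (Suc k) u, c @ take k u, [u ! k]] \<noteq> 0"
    by (meson lessThan_iff sum.not_neutral_contains_not_neutral)
  then show thesis using y that by blast
qed

lemma nabla_Omega:
  assumes "f \<in> Omega 2"
  shows "nabla f \<in> Omega 1"
proof (rule Omega_of_regrouping[OF assms])
  fix y assume "nabla f y \<noteq> 0"
  then obtain c u k where y: "y = [c, u]" "k < length u"
    and nz: "f [drop (Suc k) u, c @ take k u, [u ! k]] \<noteq> 0"
    by (rule nabla_nonzeroD)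
  have "set u = set (take k u @ u ! k # drop (Suc k) u)"
    using y(2) by (simp flip: id_take_nth_drop)
  then have "set u = set (take k u) \<union> {u ! k} \<union> set (drop (Suc k) u)"
    by simp
  then show "length y = Suc 1 \<and> valid_idx y \<and>
    (\<exists>z. f z \<noteq> 0 \<and> set (concat z) = set (concat y) \<and> length (concat z) = length (concat y))"
    using y nz by (intro conjI exI[of _ "[drop (Suc k) u, c @ take k u, [u ! k]]"])
      (auto simp: valid_idx_Cons)
qed

lemma cocycle_on_quadruple:
  assumes "bop f = 0" "b \<noteq> []" "c \<noteq> []" "d \<noteq> []"
  shows "f [a @ b, c, d] - f [a, b @ c, d] + f [a, b, c @ d] - f [d @ a, b, c] = 0"
  using fun_cong[OF assms(1), of "[a, b, c, d]"] assms(2-4) by (simp add: bop_on_quadruple)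

lemma dop_cocycle_antisym:
  assumes "bop (dop f) = 0" "u \<noteq> []" "v \<noteq> []"
  shows "f [[], u, v] + f [[], v, u] = 0"
  using fun_cong[OF assms(1), of "[[], u, v]"] assms(2-3) by (simp add: bop_on_triple dop_Cons)

lemma dop_cocycle_rotate:
  assumes "bop (dop f) = 0" "a \<noteq> []" "b \<noteq> []" "c \<noteq> []"
  shows "f [[], a @ b, c] - f [[], a, b @ c] + f [[], c @ a, b] = 0"
  using fun_cong[OF assms(1), of "[a, b, c]"] assms(2-4) by (simp add: bop_on_triple dop_Cons)

text \<open>Each letter of \<open>u\<close> contributes one instance of the cocycle identity, and the sum
  telescopes.\<close>

lemma nabla_sum_telescope:
  assumes "bop f = 0" "f \<in> Omega 2"
  shows "nabla_sum f [] (c2 @ c0) u - nabla_sum f c2 c0 u = f [[], c2, c0 @ u] - f [u, c2, c0]"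
proof (induction u arbitrary: c0)
  case (Cons e u)
  have IH: "nabla_sum f [] (c2 @ c0 @ [e]) u - nabla_sum f c2 (c0 @ [e]) u
      = f [[], c2, c0 @ e # u] - f [u, c2, c0 @ [e]]"
    using Cons[of "c0 @ [e]"] by simp
  have cocycle: "f [u, c2 @ c0, [e]] - f [u @ c2, c0, [e]] - f [u, c2, c0 @ [e]] + f [e # u, c2, c0] = 0"
  proof (cases "c2 = [] \<or> c0 = []")
    case True
    then show ?thesis using Omega2_vanishes_Nil[OF assms(2)] by auto
  next
    case False
    then show ?thesis using cocycle_on_quadruple[OF assms(1), of c2 c0 "[e]" u] by (simp add: algebra_simps)
  qed
  have "nabla_sum f [] (c2 @ c0) (e # u) - nabla_sum f c2 c0 (e # u)
      = (nabla_sum f [] (c2 @ c0 @ [e]) u - nabla_sum f c2 (c0 @ [e]) u)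
        + f [u, c2 @ c0, [e]] - f [u @ c2, c0, [e]]"
    by (simp add: algebra_simps)
  also have "\<dots> = f [[], c2, c0 @ e # u] - f [e # u, c2, c0]
      + (f [u, c2 @ c0, [e]] - f [u @ c2, c0, [e]] - f [u, c2, c0 @ [e]] + f [e # u, c2, c0])"
    unfolding IH by (simp add: algebra_simps)
  finally show ?case unfolding cocycle by simp
qed simp

lemma Omega_nat2_rotate:
  assumes "f \<in> Omega_nat 2" "c1 \<noteq> []" "c2 \<noteq> []"
  shows "f [c0, c1, c2] = f [c1, c2, c0] - f [[], c2, c0 @ c1]"
proof -
  have f: "f \<in> Omega 2" "bop f = 0" "bop (dop f) = 0"
    using assms(1) by (simp_all add: Omega_nat_def)
  show ?thesis
  proof (cases "c0 = []")
    case True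
    then show ?thesis
      using dop_cocycle_antisym[OF f(3) assms(2,3)] Omega2_vanishes_Nil[OF f(1)]
      by (simp add: eq_neg_iff_add_eq_0)
  next
    case False
    have "f [c1, c2, c0] - f [[], c1 @ c2, c0] + f [[], c1, c2 @ c0] - f [c0, c1, c2] = 0"
      (is "?cocycle = 0")
      using cocycle_on_quadruple[OF f(2) assms(2,3) False, of "[]"] by simp
    moreover have "f [[], c2 @ c0, c1] - f [[], c2, c0 @ c1] + f [[], c1 @ c2, c0] = 0"
      (is "?rotate = 0")
      using dop_cocycle_rotate[OF f(3) assms(3) False assms(2)] by simp
    moreover have "f [[], c1, c2 @ c0] + f [[], c2 @ c0, c1] = 0"
      (is "?antisym = 0")
      using dop_cocycle_antisym[OF f(3) assms(2)] assms(3) by simp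
    moreover have "f [c0, c1, c2] - (f [c1, c2, c0] - f [[], c2, c0 @ c1]) = ?antisym - ?cocycle - ?rotate"
      by (simp add: algebra_simps)
    ultimately show ?thesis by simp
  qed
qed

lemma bop_nabla:
  assumes "f \<in> Omega_nat 2"
  shows "bop (nabla f) = - f"
proof (rule Omega_eqI[of _ 2])
  have f: "f \<in> Omega 2" "bop f = 0"
    using assms by (simp_all add: Omega_nat_def)
  show "bop (nabla f) \<in> Omega 2"
    using bop_Omega[OF nabla_Omega[OF f(1)]] by (simp add: numeral_2_eq_2)
  show "- f \<in> Omega 2" by (rule Omega_uminus[OF f(1)])
  fix y :: "'a list list" assume "length y = Suc 2" "valid_idx y"
  then obtain c0 c1 c2 where y: "y = [c0, c1, c2]" and c: "c1 \<noteq> []" "c2 \<noteq> []"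
    by (auto simp: length_3_conv valid_idx_Cons)
  have "bop (nabla f) y = nabla f [c0 @ c1, c2] - nabla f [c0, c1 @ c2] + nabla f [c2 @ c0, c1]"
    using c by (simp add: y bop_on_triple)
  also have "\<dots> = nabla_sum f [] (c0 @ c1) c2 - nabla_sum f [] c0 (c1 @ c2)
      + nabla_sum f [] (c2 @ c0) c1"
    using c by (simp add: nabla_pair)
  also have "\<dots> = nabla_sum f [] (c2 @ c0) c1 - nabla_sum f c2 c0 c1"
    by (simp add: nabla_sum_append)
  also have "\<dots> = f [[], c2, c0 @ c1] - f [c1, c2, c0]"
    by (rule nabla_sum_telescope[OF f(2,1)])
  also have "\<dots> = - f y"
    using Omega_nat2_rotate[OF assms c] by (simp add: y)
  finally show "bop (nabla f) y = (- f) y" by simp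
qed

lemma bop_dop_nabla:
  assumes "f \<in> Omega_nat 2"
  shows "bop (dop (nabla f)) = (\<lambda>y. 2 * dop f y)"
proof (rule Omega_eqI[of _ 1])
  have f: "f \<in> Omega 2" "bop f = 0" "bop (dop f) = 0"
    using assms by (simp_all add: Omega_nat_def)
  show "bop (dop (nabla f)) \<in> Omega 1"
    using bop_Omega[OF dop_Omega[of "nabla f" 0]] nabla_Omega[OF f(1)] by simp
  show "(\<lambda>y. 2 * dop f y) \<in> Omega 1"
    using Omega_scale[OF dop_Omega[of f 1]] f(1) by (simp add: numeral_2_eq_2)
  fix y :: "'a list list" assume "length y = Suc 1" "valid_idx y"
  then obtain c0 c1 where y: "y = [c0, c1]" and c1: "c1 \<noteq> []"
    by (auto simp: length_Suc_conv valid_idx_Cons)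
  have "bop (dop (nabla f)) y = nabla f [[], c0 @ c1] - nabla f [[], c1 @ c0]"
    using c1 by (simp add: y bop_on_pair dop_Cons)
  also have "\<dots> = (nabla_sum f [] c0 c1 - nabla_sum f c0 [] c1)
      - (nabla_sum f [] c1 c0 - nabla_sum f c1 [] c0)"
    using c1 nabla_sum_append[of f "[]" "[]" c0 c1] nabla_sum_append[of f "[]" "[]" c1 c0]
    by (simp add: nabla_pair)
  also have "\<dots> = f [[], c0, c1] - f [[], c1, c0]"
    using nabla_sum_telescope[OF f(2,1), of c0 "[]" c1] nabla_sum_telescope[OF f(2,1), of c1 "[]" c0]
    by (simp add: Omega2_vanishes_Nil[OF f(1)])
  also have "\<dots> = 2 * dop f y"
  proof (cases "c0 = []")
    case True
    then show ?thesis using Omega2_vanishes_Nil[OF f(1)] by (simp add: y dop_Cons)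
  next
    case False
    then show ?thesis using dop_cocycle_antisym[OF f(3) False c1] c1
      by (simp add: y dop_Cons algebra_simps eq_neg_iff_add_eq_0)
  qed
  finally show "bop (dop (nabla f)) y = 2 * dop f y" .
qed

lemma dop_uminus: "dop (- f) = - dop f"
  for f :: "('b, 'k::comm_ring_1) form"
  by (simp add: fun_eq_iff dop_def)

lemma nabla_Omega_nat2_in_Omega_dot1:
  assumes "f \<in> Omega_nat 2"
  shows "nabla f \<in> Omega_dot1"
proof -
  have "bop (dop (nabla f)) + (\<lambda>y. 2 * dop (bop (nabla f)) y) = 0"
    unfolding bop_dop_nabla[OF assms] bop_nabla[OF assms] dop_uminus by (simp add: fun_eq_iff)
  then show ?thesis
    using nabla_Omega[of f] assms by (simp add: Omega_dot1_iff Omega_nat_def)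
qed

subsection \<open>The projection \<open>\<theta>\<close>\<close>

lemma theta0_psi_apply:
  "theta0 (psi x) (a, u) = x [[], a # u] - (if u \<noteq> [] then x [[a], u] else 0)"
  by (simp add: theta0_def psi_def)

lemma theta0_psi_diff: "theta0 (psi (x - y)) = theta0 (psi x) - theta0 (psi y)"
  by (simp add: fun_eq_iff theta0_psi_apply)

lemma theta0_psi_add: "theta0 (psi (x + y)) = theta0 (psi x) + theta0 (psi y)"
  by (simp add: fun_eq_iff theta0_psi_apply)

lemma theta0_psi_nabla:
  assumes "f \<in> Omega 2"
  shows "theta0 (psi (nabla f)) = 0"
proof
  fix p :: "'a \<times> 'a list"
  obtain a u where p: "p = (a, u)" by fastforce
  have "nabla f [[], a # u] = nabla_sum f [] [a] u"
    by (simp add: nabla_pair Omega2_vanishes_Nil[OF assms])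
  then show "theta0 (psi (nabla f)) p = 0 p"
    by (cases "u = []") (simp_all add: p theta0_psi_apply nabla_pair)
qed

text \<open>A \<open>b\<close>-cocycle \<open>x\<close> in \<open>\<Omega>\<^sup>1\<close> is determined by \<open>\<theta>\<^sub>0 \<psi> x\<close>: the cocycle condition moves
  the last letter of the second slot to the front of the first, down to a one-letter second slot,
  where \<open>\<theta>\<^sub>0 \<psi> x = 0\<close> forces vanishing.\<close>

lemma Omega1_cocycle_eq_0:
  assumes x: "x \<in> Omega 1" "bop x = 0" and \<theta>: "theta0 (psi x) = 0"
  shows "x = 0"
proof -
  have \<theta>x: "x [[], a # u] = (if u \<noteq> [] then x [[a], u] else 0)" for a u
    using fun_cong[OF \<theta>, of "(a, u)"] by (simp add: theta0_psi_apply)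
  have letter: "x [c, [a]] = 0" for c a
  proof (cases "c = []")
    case True
    then show ?thesis using \<theta>x[of a "[]"] by simp
  next
    case False
    then have "x [[a], c] - x [[], a # c] + x [c, [a]] = 0"
      using fun_cong[OF x(2), of "[[], [a], c]"] by (simp add: bop_on_triple)
    then show ?thesis using \<theta>x[of a c] False by simp
  qed
  have "x [c, u] = 0" if "u \<noteq> []" for c u
    using that
  proof (induction u arbitrary: c rule: rev_induct)
    case (snoc a u)
    show ?case
    proof (cases "u = []")
      case True
      then show ?thesis using letter by simp
    next
      case False
      then have "x [c @ u, [a]] - x [c, u @ [a]] + x [[a] @ c, u] = 0"
        using fun_cong[OF x(2), of "[c, u, [a]]"] by (simp add: bop_on_triple)
      then show ?thesis using letter[of "c @ u" a] snoc.IH[OF False, of "[a] @ c"] by simp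
    qed
  qed simp
  then show ?thesis
    by (intro Omega_eqI[OF x(1) Omega_zero]) (auto simp: length_Suc_conv valid_idx_Cons)
qed

lemma theta_eqI:
  assumes t: "t \<in> Omega_nat 1" and eq: "theta0 (psi t) = theta0 (psi w)"
  shows "theta w = t"
  unfolding theta_def
proof (rule the_equality)
  fix x assume x: "x \<in> Omega_nat 1 \<and> theta0 (psi x) = theta0 (psi w)"
  have "x - t = 0"
  proof (rule Omega1_cocycle_eq_0)
    show "x - t \<in> Omega 1" "bop (x - t) = 0"
      using x t by (simp_all add: Omega_nat_def Omega_diff bop_diff)
    show "theta0 (psi (x - t)) = 0"
      using x eq by (simp add: theta0_psi_diff)
  qed
  then show "x = t" by simp
qed (use t eq in simp)

lemma theta_Omega_nat1: "w \<in> Omega_nat 1 \<Longrightarrow> theta w = w"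
  by (rule theta_eqI) simp_all

lemma Omega_dot1_plus_nabla_bop:
  fixes w :: "('b, 'k::field_char_0) form"
  assumes "w \<in> Omega_dot1"
  shows "w + nabla (bop w) \<in> Omega_nat 1"
proof -
  have w: "w \<in> Omega 1" "bop (dop w) + (\<lambda>y. 2 * dop (bop w) y) = 0"
    using assms by (simp_all add: Omega_dot1_iff)
  have bw: "bop w \<in> Omega_nat 2" by (rule bop_Omega_dot1_in_Omega_nat2[OF assms])
  have "w + nabla (bop w) \<in> Omega 1"
    using Omega_add[OF w(1) nabla_Omega[of "bop w"]] bw by (simp add: Omega_nat_def)
  moreover have "bop (w + nabla (bop w)) = 0"
    by (simp add: bop_add bop_nabla[OF bw])
  moreover have "bop (dop (w + nabla (bop w))) = 0"
    using w(2) by (simp add: dop_add bop_add bop_dop_nabla[OF bw])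
  ultimately show ?thesis by (simp add: Omega_nat_def)
qed

lemma theta_Omega_dot1:
  fixes w :: "('b, 'k::field_char_0) form"
  assumes "w \<in> Omega_dot1"
  shows "theta w = w + nabla (bop w)"
proof (rule theta_eqI[OF Omega_dot1_plus_nabla_bop[OF assms]])
  have "bop w \<in> Omega 2"
    using bop_Omega_dot1_in_Omega_nat2[OF assms] by (simp add: Omega_nat_def)
  then show "theta0 (psi (w + nabla (bop w))) = theta0 (psi w)"
    by (simp add: theta0_psi_add theta0_psi_nabla)
qed

subsection \<open>The retract\<close>

lemma bX_in_Xhat_square_zero:
  assumes "x \<in> Xhat"
  shows "bX x \<in> Xhat \<and> bX (bX x) = 0"
proof -
  obtain w0 w1 where x: "x = (w0, w1)" and w0: "w0 \<in> Omega 0"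
    using assms by (auto simp: Xhat_def)
  then show ?thesis
    using bop_Omega0_in_Omega_nat1[OF w0] Omega_zero by (simp add: Xhat_def bX_def zero_prod_def)
qed

lemma bX2_in_X2hat_square_zero:
  fixes y :: "('b, 'k::field_char_0) form \<times> ('b, 'k) form \<times> ('b, 'k) form"
  assumes "y \<in> X2hat"
  shows "bX2 y \<in> X2hat \<and> bX2 (bX2 y) = 0"
proof -
  obtain w0 w2 w1 where y: "y = (w0, w2, w1)" and w: "w0 \<in> Omega 0" "w1 \<in> Omega_dot1"
    using assms by (auto simp: X2hat_def)
  then show ?thesis
    using bop_Omega_dot1_in_Omega_nat2[OF w(2)] bop_Omega0_in_Omega_nat1[OF w(1)]
      Omega_nat1_subset_Omega_dot1 bop_bop_Omega0[OF w(1)] Omega_zero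
    by (auto simp: X2hat_def bX2_def zero_prod_def)
qed

lemma i'_chain_map:
  fixes x :: "('b, 'k::comm_ring_1) form \<times> ('b, 'k) form"
  assumes "x \<in> Xhat"
  shows "i' x \<in> X2hat \<and> i' (bX x) = bX2 (i' x)"
proof -
  obtain w0 w1 where x: "x = (w0, w1)" and w: "w0 \<in> Omega 0" "w1 \<in> Omega_nat 1"
    using assms by (auto simp: Xhat_def)
  then show ?thesis
    using Omega_nat_zero Omega_nat1_subset_Omega_dot1
    by (auto simp: x X2hat_def i'_def bX_def bX2_def Omega_nat_def)
qed

lemma r'_chain_map:
  fixes y :: "('b, 'k::field_char_0) form \<times> ('b, 'k) form \<times> ('b, 'k) form"
  assumes "y \<in> X2hat"
  shows "r' y \<in> Xhat \<and> r' (bX2 y) = bX (r' y)"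
proof -
  obtain w0 w2 w1 where y: "y = (w0, w2, w1)" and w: "w0 \<in> Omega 0" "w1 \<in> Omega_dot1"
    using assms by (auto simp: X2hat_def)
  then show ?thesis
    using Omega_dot1_plus_nabla_bop[OF w(2)] theta_Omega_dot1[OF w(2)]
      theta_Omega_nat1[OF bop_Omega0_in_Omega_nat1[OF w(1)]]
    by (simp add: Xhat_def r'_def bX_def bX2_def)
qed

lemma h'_X2hat:
  fixes y :: "('b, 'k::comm_ring_1) form \<times> ('b, 'k) form \<times> ('b, 'k) form"
  assumes "y \<in> X2hat"
  shows "h' y \<in> X2hat"
proof -
  obtain w0 w2 w1 where y: "y = (w0, w2, w1)" and w2: "w2 \<in> Omega_nat 2"
    using assms by (auto simp: X2hat_def)
  then show ?thesis
    using nabla_Omega_nat2_in_Omega_dot1[OF w2]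
    by (simp add: X2hat_def h'_def Omega_zero Omega_nat_zero)
qed

lemma r'_i':
  assumes "x \<in> Xhat"
  shows "r' (i' x) = x"
  using assms theta_Omega_nat1 by (auto simp: Xhat_def r'_def i'_def)

lemma h'_i': "h' (i' x) = 0"
  by (simp add: h'_def i'_def nabla_zero zero_prod_def split: prod.split)

lemma i'_r'_homotopy:
  fixes y :: "('b, 'k::field_char_0) form \<times> ('b, 'k) form \<times> ('b, 'k) form"
  assumes "y \<in> X2hat"
  shows "i' (r' y) = y + bX2 (h' y) + h' (bX2 y)"
proof -
  obtain w0 w2 w1 where y: "y = (w0, w2, w1)" and w: "w2 \<in> Omega_nat 2" "w1 \<in> Omega_dot1"
    using assms by (auto simp: X2hat_def)
  have "i' (r' y) = (w0, 0, w1 + nabla (bop w1))"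
    by (simp add: y i'_def r'_def theta_Omega_dot1[OF w(2)])
  also have "\<dots> = (w0, w2 + bop (nabla w2), w1 + nabla (bop w1))"
    by (simp add: bop_nabla[OF w(1)])
  also have "\<dots> = y + bX2 (h' y) + h' (bX2 y)"
    by (simp add: y h'_def bX2_def)
  finally show ?thesis .
qed

theorem lemma3:
  fixes m :: "'b \<Rightarrow> 'b \<Rightarrow> 'b \<Rightarrow> 'k::field_char_0"
  assumes "assoc_algebra m"
  shows
    \<comment> \<open>the two b-supercomplexes are well defined\<close>
    "(\<forall>x \<in> (Xhat :: (('b, 'k) form \<times> ('b, 'k) form) set). bX x \<in> Xhat \<and> bX (bX x) = 0)
     \<and> (\<forall>y \<in> (X2hat :: (('b, 'k) form \<times> ('b, 'k) form \<times> ('b, 'k) form) set).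
          bX2 y \<in> X2hat \<and> bX2 (bX2 y) = 0)
     \<comment> \<open>i', r', h' are well defined, i' and r' are chain maps\<close>
     \<and> (\<forall>x \<in> (Xhat :: (('b, 'k) form \<times> ('b, 'k) form) set). i' x \<in> X2hat \<and> i' (bX x) = bX2 (i' x))
     \<and> (\<forall>y \<in> (X2hat :: (('b, 'k) form \<times> ('b, 'k) form \<times> ('b, 'k) form) set).
          r' y \<in> Xhat \<and> h' y \<in> X2hat \<and> r' (bX2 y) = bX (r' y))
     \<comment> \<open>special deformation retract identities\<close>
     \<and> (\<forall>x \<in> (Xhat :: (('b, 'k) form \<times> ('b, 'k) form) set). r' (i' x) = x \<and> h' (i' x) = 0)
     \<and> (\<forall>y \<in> (X2hat :: (('b, 'k) form \<times> ('b, 'k) form \<times> ('b, 'k) form) set).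
          i' (r' y) = y + bX2 (h' y) + h' (bX2 y))"
  by (simp add: bX_in_Xhat_square_zero bX2_in_X2hat_square_zero i'_chain_map r'_chain_map
      h'_X2hat r'_i' h'_i' i'_r'_homotopy)

end
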